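(* Let $\Omega\subset\mathbb{R}^N$ be a bounded open set and let $J$ satisfy (H0), (H0') and (H1), with moreover $\lim_{s\to0^+}\ell(s)=+\infty$. Then the embedding $\mathcal{H}_J(\Omega)\hookrightarrow L^2(\Omega)$ is compact, i.e. every subset of $\mathcal{H}_J(\Omega)$ bounded in the norm $\|\cdot\|_{\mathcal{H}_J}$ is totally bounded in $L^2(\Omega)$.
   Context: Standing setting: $N\ge1$, $\Omega\subset\mathbb{R}^N$ bounded open, $B_\varepsilon=\{z\in\mathbb{R}^N:|z|<\varepsilon\}$. (H0): $J:\mathbb{R}^N\times\mathbb{R}^N\to[0,\infty)$ is measurable, $J(x,y)=J(y,x)$, and $\sup_{x\in\mathbb{R}^N}\int_{\mathbb{R}^N}\min(1,|x-y|^2)J(x,y)\,dy<\infty$. (H0'): $J(x,y)\ge\mathcal{K}(x-y)\ge0$ for a measurable $\mathcal{K}:\mathbb{R}^N\to[0,\infty)$ with $\mathcal{K}\notin L^1(B_\varepsilon)$ for every $\varepsilon>0$. (H1): there exist $\rho>0$ and $\ell:(0,\rho)\to(0,\infty)$, bounded above and below by positive constants on $[\varepsilon,\rho)$ for every $\varepsilon\in(0,\rho)$, such that $\mathcal{K}(z)=|z|^{-N}\ell(|z|)$ for $0<|z|<\rho$ and $M(r):=\int_r^\rho\frac{\ell(s)}{s}\,ds\to\infty$ as $r\to0^+$. Let $Q_\Omega=(\Omega^c\times\Omega^c)^c$ and $\mathcal{E}(u,v)=\frac12\iint_{Q_\Omega}(u(x)-u(y))(v(x)-v(y))J(x,y)\,dx\,dy$.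 $\mathcal{H}_J(\Omega)=\{u:\mathbb{R}^N\to\mathbb{R}$ measurable$:\ u|_\Omega\in L^2(\Omega),\ \mathcal{E}(u,u)<\infty\}$, with norm $\|u\|_{\mathcal{H}_J}=(\int_\Omega u^2+\mathcal{E}(u,u))^{1/2}$. *)

theory Defs
  imports "HOL-Analysis.Analysis"
begin

definition QOmega :: "'a set \<Rightarrow> ('a \<times> 'a) set" where
  "QOmega \<Omega> = - ((- \<Omega>) \<times> (- \<Omega>))"

definition energy :: "('a::euclidean_space \<times> 'a \<Rightarrow> real) \<Rightarrow> 'a set \<Rightarrow> ('a \<Rightarrow> real) \<Rightarrow> ennreal" where
  "energy J \<Omega> u = (1/2) * (\<integral>\<^sup>+ p \<in> QOmega \<Omega>.
       ennreal ((u (fst p) - u (snd p))\<^sup>2 * J p) \<partial>lebesgue)"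

definition L2sq :: "'a::euclidean_space set \<Rightarrow> ('a \<Rightarrow> real) \<Rightarrow> ennreal" where
  "L2sq \<Omega> u = (\<integral>\<^sup>+ x \<in> \<Omega>. ennreal ((u x)\<^sup>2) \<partial>lebesgue)"

definition HJ :: "('a::euclidean_space \<times> 'a \<Rightarrow> real) \<Rightarrow> 'a set \<Rightarrow> ('a \<Rightarrow> real) set" where
  "HJ J \<Omega> = {u. u \<in> borel_measurable lebesgue \<and> L2sq \<Omega> u < \<infinity> \<and> energy J \<Omega> u < \<infinity>}"

definition HJnormsq :: "('a::euclidean_space \<times> 'a \<Rightarrow> real) \<Rightarrow> 'a set \<Rightarrow> ('a \<Rightarrow> real) \<Rightarrow> ennreal" where
  "HJnormsq J \<Omega> u = L2sq \<Omega> u + energy J \<Omega> u"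

definition L2_totally_bounded :: "'a::euclidean_space set \<Rightarrow> ('a \<Rightarrow> real) set \<Rightarrow> bool" where
  "L2_totally_bounded \<Omega> S \<longleftrightarrow>
     (\<forall>e>0. \<exists>F. finite F \<and> F \<subseteq> S \<and>
        (\<forall>u\<in>S. \<exists>v\<in>F. L2sq \<Omega> (\<lambda>x. u x - v x) < ennreal (e\<^sup>2)))"

end

theory Submission
  imports Defs
begin

text \<open>
  Since \<open>ell s \<rightarrow> \<infinity>\<close> as \<open>s \<rightarrow> 0\<close>, the bound \<open>J(x,y) \<ge> ell |x - y| / |x - y|^N\<close>
  gives \<open>J \<ge> T / r^N\<close> for \<open>0 < |x - y| \<le> r\<close>, with \<open>T\<close> as large as we like once
  \<open>r\<close> is small. Cover \<open>\<Omega>\<close> by finitely many cubes \<open>Q\<close> of side \<open>r / N\<close>. On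
  \<open>(Q \<inter> \<Omega>) \<times> Q\<close> the integrand \<open>(u x - u y)\<^sup>2\<close> is then at most \<open>r^N / T\<close> times the
  energy density, so choosing in each cube a point \<open>y\<^sub>Q\<close> at which
  \<open>\<integral>\<^sub>Q\<^sub>\<inter>\<^sub>\<Omega> (u x - u y\<^sub>Q)\<^sup>2 dx\<close> is at most its mean over \<open>Q\<close> shows that every \<open>u\<close> in a
  bounded set is uniformly \<open>L\<^sup>2\<close>-close to the step function with values \<open>u y\<^sub>Q\<close>.
  The \<open>L\<^sup>2\<close> bound keeps these values bounded on the cubes meeting \<open>\<Omega>\<close> in positive
  measure, so rounding them to a fine grid sorts the set into finitely many classes
  of small \<open>L\<^sup>2\<close>-diameter.
\<close>

section \<open>Integrals over finite partitions\<close>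

lemma nn_integral_split_partition:
  fixes f :: "'a \<Rightarrow> ennreal"
  assumes "finite I" "\<And>k. k \<in> I \<Longrightarrow> Q k \<in> sets M" "A \<in> sets M"
    and "disjoint_family_on Q I" "A \<subseteq> (\<Union>k\<in>I. Q k)" "f \<in> borel_measurable M"
  shows "(\<integral>\<^sup>+x\<in>A. f x \<partial>M) = (\<Sum>k\<in>I. \<integral>\<^sup>+x\<in>Q k \<inter> A. f x \<partial>M)"
proof -
  have disj: "disjoint_family_on (\<lambda>k. Q k \<inter> A) I"
    using assms(4) by (auto simp: disjoint_family_on_def)
  have "(\<Sum>k\<in>I. \<integral>\<^sup>+x\<in>Q k \<inter> A. f x \<partial>M) = (\<integral>\<^sup>+x. f x * (\<Sum>k\<in>I. indicator (Q k \<inter> A) x) \<partial>M)"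
    using assms by (simp add: nn_integral_sum[symmetric] sum_distrib_left)
  also have "\<dots> = (\<integral>\<^sup>+x\<in>A. f x \<partial>M)"
    by (simp add: indicator_UN_disjoint[OF assms(1) disj, symmetric] Int_absorb1[OF assms(5)])
  finally show ?thesis ..
qed

lemma nn_integral_lborel_Times:
  fixes f :: "'a::euclidean_space \<times> 'b::euclidean_space \<Rightarrow> ennreal"
  assumes "f \<in> borel_measurable lborel" "A \<in> sets lborel" "B \<in> sets lborel"
  shows "(\<integral>\<^sup>+p\<in>A \<times> B. f p \<partial>lborel) = (\<integral>\<^sup>+y\<in>B. (\<integral>\<^sup>+x\<in>A. f (x, y) \<partial>lborel) \<partial>lborel)"
proof -
  have [measurable]: "f \<in> borel_measurable (lborel \<Otimes>\<^sub>M lborel)" "A \<in> sets borel" "B \<in> sets borel"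
    using assms by (simp_all add: lborel_prod)
  have "(\<integral>\<^sup>+y\<in>B. (\<integral>\<^sup>+x\<in>A. f (x, y) \<partial>lborel) \<partial>lborel)
      = (\<integral>\<^sup>+y. (\<integral>\<^sup>+x. f (x, y) * indicator (A \<times> B) (x, y) \<partial>lborel) \<partial>lborel)"
    by (intro nn_integral_cong) (simp add: nn_integral_multc[symmetric] indicator_times mult.assoc)
  also have "\<dots> = (\<integral>\<^sup>+p\<in>A \<times> B. f p \<partial>(lborel \<Otimes>\<^sub>M lborel))"
    by (rule lborel_pair.nn_integral_snd) measurable
  finally show ?thesis
    by (simp add: lborel_prod)
qed

lemma AE_lborel_fst_snd:
  assumes "AE x in lborel. P x"
  shows "AE p in (lborel :: ('a::euclidean_space \<times> 'a) measure). P (fst p) \<and> P (snd p)"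
proof -
  obtain N where N: "{x. \<not> P x} \<subseteq> N" "N \<in> null_sets lborel"
    using AE_E[OF assms] by (auto simp: null_sets_def)
  have "N \<times> UNIV \<union> UNIV \<times> N \<in> null_sets (lborel \<Otimes>\<^sub>M lborel :: ('a \<times> 'a) measure)"
    using N(2) by (intro null_sets.Un lborel.times_in_null_sets1 lborel.times_in_null_sets2) auto
  then show ?thesis
    using N(1) by (intro AE_I'[of "N \<times> UNIV \<union> UNIV \<times> N"]) (auto simp: lborel_prod)
qed

lemma exists_point_below_average:
  fixes f :: "'a \<Rightarrow> ennreal"
  assumes "AE y in M. P y" "A \<in> sets M" "ennreal m \<le> emeasure M A" "m > 0" "t > 0"
    and finite: "(\<integral>\<^sup>+y\<in>A. f y \<partial>M) \<noteq> \<infinity>"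
  obtains y where "y \<in> A" "P y" "f y \<le> (\<integral>\<^sup>+y\<in>A. f y \<partial>M) * ennreal (1 / m) + ennreal t"
proof (rule ccontr)
  define B where "B = (\<integral>\<^sup>+y\<in>A. f y \<partial>M) * ennreal (1 / m) + ennreal t"
  assume "\<not> thesis"
  with that have below: "B < f y" if "y \<in> A" "P y" for y
    using \<open>y \<in> A\<close> \<open>P y\<close> unfolding B_def by (meson not_le)
  have "AE y in M. B * indicator A y \<le> f y * indicator A y"
    using assms(1) by eventually_elim (auto simp: indicator_def intro: less_imp_le below)
  then have "B * emeasure M A \<le> (\<integral>\<^sup>+y\<in>A. f y \<partial>M)"
    using nn_integral_mono_AE assms(2) by (fastforce simp: nn_integral_cmult_indicator)
  moreover have "B * ennreal m \<le> B * emeasure M A"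
    using assms(3) by (rule mult_left_mono) simp
  moreover have "B * ennreal m = (\<integral>\<^sup>+y\<in>A. f y \<partial>M) + ennreal (t * m)"
    using \<open>m > 0\<close> \<open>t > 0\<close>
    by (simp add: B_def distrib_right mult.assoc ennreal_mult[symmetric])
  ultimately have "(\<integral>\<^sup>+y\<in>A. f y \<partial>M) + ennreal (t * m) \<le> (\<integral>\<^sup>+y\<in>A. f y \<partial>M) + 0"
    by (metis add.right_neutral order_trans)
  with finite \<open>m > 0\<close> \<open>t > 0\<close> show False
    by (simp add: ennreal_add_left_cancel_le)
qed

lemma exists_points_below_average_sum:
  fixes G :: "'i \<Rightarrow> 'a \<Rightarrow> ennreal"
  assumes "finite I" "AE y in M. P y" "\<And>k. k \<in> I \<Longrightarrow> Q k \<in> sets M"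
    and "\<And>k. k \<in> I \<Longrightarrow> ennreal m \<le> emeasure M (Q k)" "m > 0" "t > 0"
    and sum: "(\<Sum>k\<in>I. \<integral>\<^sup>+y\<in>Q k. G k y \<partial>M) \<le> ennreal B" and "B \<ge> 0"
  shows "\<exists>y. (\<forall>k\<in>I. P (y k)) \<and> (\<Sum>k\<in>I. G k (y k)) \<le> ennreal (B / m + t)"
proof -
  define \<tau> where "\<tau> = t / (card I + 1)"
  have "\<tau> > 0"
    using \<open>t > 0\<close> by (simp add: \<tau>_def)
  have ex: "\<forall>k\<in>I. \<exists>y. P y \<and> G k y \<le> (\<integral>\<^sup>+y\<in>Q k. G k y \<partial>M) * ennreal (1 / m) + ennreal \<tau>"
  proof
    fix k assume "k \<in> I"
    have "(\<integral>\<^sup>+y\<in>Q k. G k y \<partial>M) \<le> ennreal B"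
      by (rule order_trans[OF member_le_sum sum]) (use \<open>k \<in> I\<close> assms(1) in auto)
    then have "(\<integral>\<^sup>+y\<in>Q k. G k y \<partial>M) \<noteq> \<infinity>"
      by (auto simp: top_unique)
    then obtain y where "P y" "G k y \<le> (\<integral>\<^sup>+y\<in>Q k. G k y \<partial>M) * ennreal (1 / m) + ennreal \<tau>"
      by (rule exists_point_below_average[OF assms(2) assms(3,4)[OF \<open>k \<in> I\<close>] \<open>m > 0\<close> \<open>\<tau> > 0\<close>])
    then show "\<exists>y. P y \<and> G k y \<le> (\<integral>\<^sup>+y\<in>Q k. G k y \<partial>M) * ennreal (1 / m) + ennreal \<tau>"
      by blast
  qed
  obtain y where y: "\<forall>k\<in>I. P (y k) \<and>
      G k (y k) \<le> (\<integral>\<^sup>+y\<in>Q k. G k y \<partial>M) * ennreal (1 / m) + ennreal \<tau>"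
    using bchoice[OF ex] by blast
  have "(\<Sum>k\<in>I. G k (y k)) \<le> (\<Sum>k\<in>I. (\<integral>\<^sup>+y\<in>Q k. G k y \<partial>M) * ennreal (1 / m) + ennreal \<tau>)"
    by (rule sum_mono) (use y in blast)
  also have "\<dots> = (\<Sum>k\<in>I. \<integral>\<^sup>+y\<in>Q k. G k y \<partial>M) * ennreal (1 / m) + ennreal (card I * \<tau>)"
    using \<open>\<tau> > 0\<close> by (simp add: sum.distrib sum_distrib_right ennreal_mult ennreal_of_nat_eq_real_of_nat)
  also have "\<dots> \<le> ennreal B * ennreal (1 / m) + ennreal t"
  proof (intro add_mono mult_right_mono ennreal_leI sum)
    show "card I * \<tau> \<le> t"
      using \<open>t > 0\<close> by (simp add: \<tau>_def field_simps)
  qed simp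
  also have "\<dots> = ennreal (B / m + t)"
    using \<open>B \<ge> 0\<close> \<open>m > 0\<close> \<open>t > 0\<close> by (simp add: ennreal_mult[symmetric])
  finally show ?thesis
    using y by blast
qed

section \<open>Uniform step approximation implies total boundedness in \<open>L\<^sup>2\<close>\<close>

lemma sq_diff_le_via_constants:
  fixes p q a b :: real
  shows "(p - q)\<^sup>2 \<le> 3 * (p - a)\<^sup>2 + 3 * (a - b)\<^sup>2 + 3 * (q - b)\<^sup>2"
proof -
  have "0 \<le> ((p - a) - (a - b))\<^sup>2 + ((a - b) - (b - q))\<^sup>2 + ((p - a) - (b - q))\<^sup>2"
    by simp
  then show ?thesis
    by (simp add: power2_eq_square algebra_simps)
qed

lemma nn_integral_sq_diff_le_via_constants:
  fixes u v :: "'a \<Rightarrow> real"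
  assumes [measurable]: "u \<in> borel_measurable M" "v \<in> borel_measurable M" "A \<in> sets M"
  shows "(\<integral>\<^sup>+x\<in>A. ennreal ((u x - v x)\<^sup>2) \<partial>M) \<le>
     3 * (\<integral>\<^sup>+x\<in>A. ennreal ((u x - a)\<^sup>2) \<partial>M) + 3 * (ennreal ((a - b)\<^sup>2) * emeasure M A)
     + 3 * (\<integral>\<^sup>+x\<in>A. ennreal ((v x - b)\<^sup>2) \<partial>M)"
proof -
  have "(\<integral>\<^sup>+x\<in>A. ennreal ((u x - v x)\<^sup>2) \<partial>M) \<le>
     (\<integral>\<^sup>+x. 3 * (ennreal ((u x - a)\<^sup>2) * indicator A x) + 3 * (ennreal ((a - b)\<^sup>2) * indicator A x)
        + 3 * (ennreal ((v x - b)\<^sup>2) * indicator A x) \<partial>M)"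
  proof (intro nn_integral_mono)
    fix x
    have "ennreal ((u x - v x)\<^sup>2) \<le> ennreal (3 * (u x - a)\<^sup>2 + 3 * (a - b)\<^sup>2 + 3 * (v x - b)\<^sup>2)"
      by (intro ennreal_leI sq_diff_le_via_constants)
    then show "ennreal ((u x - v x)\<^sup>2) * indicator A x \<le> 3 * (ennreal ((u x - a)\<^sup>2) * indicator A x)
        + 3 * (ennreal ((a - b)\<^sup>2) * indicator A x) + 3 * (ennreal ((v x - b)\<^sup>2) * indicator A x)"
      by (simp add: indicator_def ennreal_plus ennreal_mult)
  qed
  also have "\<dots> = 3 * (\<integral>\<^sup>+x\<in>A. ennreal ((u x - a)\<^sup>2) \<partial>M) + 3 * (ennreal ((a - b)\<^sup>2) * emeasure M A)
     + 3 * (\<integral>\<^sup>+x\<in>A. ennreal ((v x - b)\<^sup>2) \<partial>M)"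
    by (simp add: nn_integral_add nn_integral_cmult nn_integral_cmult_indicator)
  finally show ?thesis .
qed

lemma abs_le_of_L2_bounds:
  fixes u :: "'a \<Rightarrow> real"
  assumes [measurable]: "u \<in> borel_measurable M" "A \<in> sets M"
    and A: "emeasure M A \<noteq> \<infinity>" "measure M A > 0"
    and u_bound: "(\<integral>\<^sup>+x\<in>A. ennreal ((u x)\<^sup>2) \<partial>M) \<le> ennreal C"
    and close: "(\<integral>\<^sup>+x\<in>A. ennreal ((u x - a)\<^sup>2) \<partial>M) \<le> ennreal \<epsilon>"
    and "C \<ge> 0" "\<epsilon> \<ge> 0"
  shows "\<bar>a\<bar> \<le> sqrt ((2 * C + 2 * \<epsilon>) / measure M A)"
proof -
  have "ennreal (a\<^sup>2 * measure M A) = (\<integral>\<^sup>+x\<in>A. ennreal (a\<^sup>2) \<partial>M)"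
    using A by (simp add: nn_integral_cmult_indicator ennreal_mult emeasure_eq_ennreal_measure)
  also have "\<dots> \<le> (\<integral>\<^sup>+x. 2 * (ennreal ((u x)\<^sup>2) * indicator A x) + 2 * (ennreal ((u x - a)\<^sup>2) * indicator A x) \<partial>M)"
  proof (intro nn_integral_mono)
    fix x
    have "0 \<le> (2 * u x - a)\<^sup>2"
      by simp
    then have "ennreal (a\<^sup>2) \<le> ennreal (2 * (u x)\<^sup>2 + 2 * (u x - a)\<^sup>2)"
      by (intro ennreal_leI) (simp add: power2_eq_square algebra_simps)
    then show "ennreal (a\<^sup>2) * indicator A x \<le> 2 * (ennreal ((u x)\<^sup>2) * indicator A x) + 2 * (ennreal ((u x - a)\<^sup>2) * indicator A x)"
      by (simp add: indicator_def ennreal_plus ennreal_mult)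
  qed
  also have "\<dots> = 2 * (\<integral>\<^sup>+x\<in>A. ennreal ((u x)\<^sup>2) \<partial>M) + 2 * (\<integral>\<^sup>+x\<in>A. ennreal ((u x - a)\<^sup>2) \<partial>M)"
    by (simp add: nn_integral_add nn_integral_cmult)
  also have "\<dots> \<le> ennreal (2 * C + 2 * \<epsilon>)"
    using add_mono[OF mult_left_mono[OF u_bound] mult_left_mono[OF close]] \<open>C \<ge> 0\<close> \<open>\<epsilon> \<ge> 0\<close>
    by (simp add: ennreal_plus ennreal_mult)
  finally have "a\<^sup>2 * measure M A \<le> 2 * C + 2 * \<epsilon>"
    using \<open>C \<ge> 0\<close> \<open>\<epsilon> \<ge> 0\<close> by (subst (asm) ennreal_le_iff) auto
  then have "a\<^sup>2 \<le> (2 * C + 2 * \<epsilon>) / measure M A"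
    using A(2) by (simp add: pos_le_divide_eq)
  then show ?thesis
    using real_sqrt_le_mono by fastforce
qed

lemma L2sq_diff_le_of_step_approximations:
  fixes u v :: "'a::euclidean_space \<Rightarrow> real" and Q :: "'i \<Rightarrow> 'a set"
  assumes I: "finite I" "\<And>k. k \<in> I \<Longrightarrow> Q k \<in> sets lebesgue" "disjoint_family_on Q I"
      "\<Omega> \<subseteq> (\<Union>k\<in>I. Q k)"
    and \<Omega>: "\<Omega> \<in> sets lebesgue" "emeasure lebesgue \<Omega> \<noteq> \<infinity>"
    and [measurable]: "u \<in> borel_measurable lebesgue" "v \<in> borel_measurable lebesgue"
    and u_approx: "(\<Sum>k\<in>I. \<integral>\<^sup>+x\<in>Q k \<inter> \<Omega>. ennreal ((u x - a k)\<^sup>2) \<partial>lebesgue) \<le> ennreal \<epsilon>"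
    and v_approx: "(\<Sum>k\<in>I. \<integral>\<^sup>+x\<in>Q k \<inter> \<Omega>. ennreal ((v x - b k)\<^sup>2) \<partial>lebesgue) \<le> ennreal \<epsilon>"
    and close: "\<And>k. k \<in> I \<Longrightarrow> measure lebesgue (Q k \<inter> \<Omega>) \<noteq> 0 \<Longrightarrow> \<bar>a k - b k\<bar> \<le> \<delta>"
    and "\<epsilon> \<ge> 0"
  shows "L2sq \<Omega> (\<lambda>x. u x - v x) \<le> ennreal (6 * \<epsilon> + 3 * (\<delta>\<^sup>2 * measure lebesgue \<Omega>))"
proof -
  have QI_sets: "Q k \<inter> \<Omega> \<in> sets lebesgue" if "k \<in> I" for k
    using I(2)[OF that] \<Omega>(1) by blast
  have QI_finite: "emeasure lebesgue (Q k \<inter> \<Omega>) = ennreal (measure lebesgue (Q k \<inter> \<Omega>))" if "k \<in> I" for k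
    using QI_sets[OF that] \<Omega> emeasure_mono[of "Q k \<inter> \<Omega>" \<Omega> lebesgue]
    by (intro emeasure_eq_ennreal_measure) (auto simp: top_unique)
  have "(\<Sum>k\<in>I. ennreal ((a k - b k)\<^sup>2) * emeasure lebesgue (Q k \<inter> \<Omega>))
      \<le> (\<Sum>k\<in>I. ennreal (\<delta>\<^sup>2) * emeasure lebesgue (Q k \<inter> \<Omega>))"
  proof (intro sum_mono)
    fix k assume k: "k \<in> I"
    show "ennreal ((a k - b k)\<^sup>2) * emeasure lebesgue (Q k \<inter> \<Omega>) \<le> ennreal (\<delta>\<^sup>2) * emeasure lebesgue (Q k \<inter> \<Omega>)"
    proof (cases "measure lebesgue (Q k \<inter> \<Omega>) = 0")
      case False
      then have "\<bar>a k - b k\<bar>\<^sup>2 \<le> \<delta>\<^sup>2"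
        using close[OF k] by (intro power_mono) auto
      then show ?thesis
        by (intro mult_right_mono ennreal_leI) auto
    qed (simp add: QI_finite[OF k])
  qed
  also have "\<dots> = ennreal (\<delta>\<^sup>2) * emeasure lebesgue \<Omega>"
    using nn_integral_split_partition[OF I(1,2) \<Omega>(1) I(3,4), of "\<lambda>_. 1"] QI_sets \<Omega>(1)
    by (simp add: sum_distrib_left)
  finally have steps: "(\<Sum>k\<in>I. ennreal ((a k - b k)\<^sup>2) * emeasure lebesgue (Q k \<inter> \<Omega>))
      \<le> ennreal (\<delta>\<^sup>2 * measure lebesgue \<Omega>)"
    using \<Omega>(2) by (simp add: emeasure_eq_ennreal_measure ennreal_mult)
  have "L2sq \<Omega> (\<lambda>x. u x - v x) = (\<Sum>k\<in>I. \<integral>\<^sup>+x\<in>Q k \<inter> \<Omega>. ennreal ((u x - v x)\<^sup>2) \<partial>lebesgue)"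
    unfolding L2sq_def by (rule nn_integral_split_partition[OF I(1,2) \<Omega>(1) I(3,4)]) measurable
  also have "\<dots> \<le> (\<Sum>k\<in>I. 3 * (\<integral>\<^sup>+x\<in>Q k \<inter> \<Omega>. ennreal ((u x - a k)\<^sup>2) \<partial>lebesgue)
       + 3 * (ennreal ((a k - b k)\<^sup>2) * emeasure lebesgue (Q k \<inter> \<Omega>))
       + 3 * (\<integral>\<^sup>+x\<in>Q k \<inter> \<Omega>. ennreal ((v x - b k)\<^sup>2) \<partial>lebesgue))"
    by (intro sum_mono nn_integral_sq_diff_le_via_constants QI_sets) measurable
  also have "\<dots> = 3 * (\<Sum>k\<in>I. \<integral>\<^sup>+x\<in>Q k \<inter> \<Omega>. ennreal ((u x - a k)\<^sup>2) \<partial>lebesgue)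
       + 3 * (\<Sum>k\<in>I. ennreal ((a k - b k)\<^sup>2) * emeasure lebesgue (Q k \<inter> \<Omega>))
       + 3 * (\<Sum>k\<in>I. \<integral>\<^sup>+x\<in>Q k \<inter> \<Omega>. ennreal ((v x - b k)\<^sup>2) \<partial>lebesgue)"
    by (simp add: sum.distrib sum_distrib_left)
  also have "\<dots> \<le> 3 * ennreal \<epsilon> + 3 * ennreal (\<delta>\<^sup>2 * measure lebesgue \<Omega>) + 3 * ennreal \<epsilon>"
    by (intro add_mono mult_left_mono u_approx v_approx steps) auto
  also have "\<dots> = ennreal (6 * \<epsilon> + 3 * (\<delta>\<^sup>2 * measure lebesgue \<Omega>))"
    using \<open>\<epsilon> \<ge> 0\<close> measure_nonneg[of lebesgue \<Omega>]
    by (subst ennreal_plus, simp_all add: ennreal_mult' add_ac flip: distrib_right)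
  finally show ?thesis .
qed

lemma floor_divide_mem_symmetric_range:
  fixes a R \<delta> :: real
  assumes "\<delta> > 0" "\<bar>a\<bar> \<le> R"
  shows "\<lfloor>a / \<delta>\<rfloor> \<in> {-\<lceil>R / \<delta>\<rceil>..\<lceil>R / \<delta>\<rceil>}"
proof -
  have "- R \<le> a" "a \<le> R"
    using assms(2) by auto
  then have "- R / \<delta> \<le> a / \<delta>" "a / \<delta> \<le> R / \<delta>"
    using assms(1) divide_right_mono[of "- R" a \<delta>] divide_right_mono[of a R \<delta>] by auto
  then show ?thesis
    by (simp add: floor_le_iff) linarith
qed

lemma abs_diff_le_of_floor_divide_eq:
  fixes a b \<delta> :: real
  assumes "\<delta> > 0" "\<lfloor>a / \<delta>\<rfloor> = \<lfloor>b / \<delta>\<rfloor>"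
  shows "\<bar>a - b\<bar> \<le> \<delta>"
proof -
  have "\<bar>a / \<delta> - b / \<delta>\<bar> < 1"
    using assms(2) by linarith
  then show ?thesis
    using assms(1) by (simp add: diff_divide_distrib[symmetric] abs_divide)
qed

lemma L2_totally_boundedI_finite_classes:
  assumes "\<And>e. e > 0 \<Longrightarrow> \<exists>f :: ('a::euclidean_space \<Rightarrow> real) \<Rightarrow> 'c. finite (f ` S) \<and>
      (\<forall>u\<in>S. \<forall>v\<in>S. f u = f v \<longrightarrow> L2sq \<Omega> (\<lambda>x. u x - v x) < ennreal (e\<^sup>2))"
  shows "L2_totally_bounded \<Omega> S"
  unfolding L2_totally_bounded_def
proof (intro allI impI)
  fix e :: real assume "e > 0"
  then obtain f :: "('a \<Rightarrow> real) \<Rightarrow> 'c" where fin: "finite (f ` S)"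
    and close: "\<And>u v. u \<in> S \<Longrightarrow> v \<in> S \<Longrightarrow> f u = f v \<Longrightarrow> L2sq \<Omega> (\<lambda>x. u x - v x) < ennreal (e\<^sup>2)"
    using assms by meson
  define rep where "rep c = (SOME v. v \<in> S \<and> f v = c)" for c
  have rep: "rep (f u) \<in> S \<and> f (rep (f u)) = f u" if "u \<in> S" for u
    unfolding rep_def using someI_ex[of "\<lambda>v. v \<in> S \<and> f v = f u"] that by blast
  show "\<exists>F. finite F \<and> F \<subseteq> S \<and> (\<forall>u\<in>S. \<exists>v\<in>F. L2sq \<Omega> (\<lambda>x. u x - v x) < ennreal (e\<^sup>2))"
  proof (intro exI conjI ballI)
    show "finite (rep ` f ` S)" "rep ` f ` S \<subseteq> S"
      using fin rep by auto
    fix u assume "u \<in> S"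
    then show "\<exists>v\<in>rep ` f ` S. L2sq \<Omega> (\<lambda>x. u x - v x) < ennreal (e\<^sup>2)"
      using rep close by (metis image_eqI)
  qed
qed

lemma set_nn_integral_sq_le_L2sq:
  "(\<integral>\<^sup>+x\<in>A \<inter> \<Omega>. ennreal ((u x)\<^sup>2) \<partial>lebesgue) \<le> L2sq \<Omega> u"
  unfolding L2sq_def by (intro nn_integral_mono) (auto simp: indicator_def)

lemma exists_finite_rounding_classes:
  fixes \<Omega> :: "'a::euclidean_space set" and Q :: "'i \<Rightarrow> 'a set" and c :: "('a \<Rightarrow> real) \<Rightarrow> 'i \<Rightarrow> real"
  assumes I: "finite I" "\<And>k. k \<in> I \<Longrightarrow> Q k \<in> sets lebesgue" "disjoint_family_on Q I"
      "\<Omega> \<subseteq> (\<Union>k\<in>I. Q k)"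
    and \<Omega>: "\<Omega> \<in> sets lebesgue" "emeasure lebesgue \<Omega> \<noteq> \<infinity>"
    and S_meas: "\<And>u. u \<in> S \<Longrightarrow> u \<in> borel_measurable lebesgue"
    and S_bounded: "\<And>u. u \<in> S \<Longrightarrow> L2sq \<Omega> u \<le> ennreal C" and "C \<ge> 0"
    and c: "\<And>u. u \<in> S \<Longrightarrow> (\<Sum>k\<in>I. \<integral>\<^sup>+x\<in>Q k \<inter> \<Omega>. ennreal ((u x - c u k)\<^sup>2) \<partial>lebesgue) \<le> ennreal \<epsilon>"
    and "\<epsilon> \<ge> 0" "\<delta> > 0"
  shows "\<exists>f :: ('a \<Rightarrow> real) \<Rightarrow> 'i \<Rightarrow> int. finite (f ` S) \<and> (\<forall>u\<in>S. \<forall>v\<in>S. f u = f v \<longrightarrow>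
      L2sq \<Omega> (\<lambda>x. u x - v x) \<le> ennreal (6 * \<epsilon> + 3 * (\<delta>\<^sup>2 * measure lebesgue \<Omega>)))"
proof -
  define \<mu> where "\<mu> k = measure lebesgue (Q k \<inter> \<Omega>)" for k
  define R where "R k = sqrt ((2 * C + 2 * \<epsilon>) / \<mu> k)" for k
  \<comment> \<open>Coefficients on null cells are not controlled by the \<open>L\<^sup>2\<close> bound, but they do not affect distances either.\<close>
  define idx where "idx u = restrict (\<lambda>k. if \<mu> k > 0 then \<lfloor>c u k / \<delta>\<rfloor> else 0) I" for u
  have c_bounded: "\<bar>c u k\<bar> \<le> R k" if u: "u \<in> S" and k: "k \<in> I" and "\<mu> k > 0" for u k
  proof -
    have "(\<integral>\<^sup>+x\<in>Q k \<inter> \<Omega>. ennreal ((u x)\<^sup>2) \<partial>lebesgue) \<le> ennreal C"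
      using set_nn_integral_sq_le_L2sq S_bounded[OF u] by (rule order_trans)
    moreover have "(\<integral>\<^sup>+x\<in>Q k \<inter> \<Omega>. ennreal ((u x - c u k)\<^sup>2) \<partial>lebesgue) \<le> ennreal \<epsilon>"
      using member_le_sum[OF k, of "\<lambda>k. \<integral>\<^sup>+x\<in>Q k \<inter> \<Omega>. ennreal ((u x - c u k)\<^sup>2) \<partial>lebesgue"] c[OF u] I(1)
      by simp
    moreover have "emeasure lebesgue (Q k \<inter> \<Omega>) \<noteq> \<infinity>"
      using \<Omega> I(2)[OF k] emeasure_mono[of "Q k \<inter> \<Omega>" \<Omega> lebesgue] by (auto simp: top_unique)
    ultimately show ?thesis
      unfolding R_def using I(2)[OF k] \<Omega>(1) \<open>\<mu> k > 0\<close> \<open>C \<ge> 0\<close> \<open>\<epsilon> \<ge> 0\<close> S_meas[OF u]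
      by (auto simp: \<mu>_def intro!: abs_le_of_L2_bounds)
  qed
  have "idx u \<in> PiE I (\<lambda>k. {-\<lceil>R k / \<delta>\<rceil>..\<lceil>R k / \<delta>\<rceil>})" if "u \<in> S" for u
    unfolding idx_def restrict_PiE_iff
  proof
    fix k assume "k \<in> I"
    have "0 \<le> R k / \<delta>"
      using \<open>C \<ge> 0\<close> \<open>\<epsilon> \<ge> 0\<close> \<open>\<delta> > 0\<close> by (simp add: R_def \<mu>_def)
    then show "(if \<mu> k > 0 then \<lfloor>c u k / \<delta>\<rfloor> else 0) \<in> {-\<lceil>R k / \<delta>\<rceil>..\<lceil>R k / \<delta>\<rceil>}"
      using floor_divide_mem_symmetric_range[OF \<open>\<delta> > 0\<close> c_bounded[OF \<open>u \<in> S\<close> \<open>k \<in> I\<close>]] by auto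
  qed
  then have "finite (idx ` S)"
    by (rule finite_subset[OF image_subsetI]) (auto intro: finite_PiE I(1))
  moreover have "L2sq \<Omega> (\<lambda>x. u x - v x) \<le> ennreal (6 * \<epsilon> + 3 * (\<delta>\<^sup>2 * measure lebesgue \<Omega>))"
    if u: "u \<in> S" and v: "v \<in> S" and "idx u = idx v" for u v
  proof (rule L2sq_diff_le_of_step_approximations[OF I \<Omega> S_meas[OF u] S_meas[OF v] c[OF u] c[OF v] _ \<open>\<epsilon> \<ge> 0\<close>])
    fix k assume "k \<in> I" "measure lebesgue (Q k \<inter> \<Omega>) \<noteq> 0"
    then have "\<mu> k > 0"
      by (simp add: \<mu>_def order_neq_le_trans)
    then have "\<lfloor>c u k / \<delta>\<rfloor> = \<lfloor>c v k / \<delta>\<rfloor>"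
      using fun_cong[OF \<open>idx u = idx v\<close>, of k] \<open>k \<in> I\<close> by (simp add: idx_def)
    then show "\<bar>c u k - c v k\<bar> \<le> \<delta>"
      by (rule abs_diff_le_of_floor_divide_eq[OF \<open>\<delta> > 0\<close>])
  qed
  ultimately show ?thesis
    by (intro exI[of _ idx]) auto
qed

lemma L2_totally_bounded_of_step_approximation:
  fixes \<Omega> :: "'a::euclidean_space set" and S :: "('a \<Rightarrow> real) set"
  assumes \<Omega>: "\<Omega> \<in> sets lebesgue" "emeasure lebesgue \<Omega> \<noteq> \<infinity>"
    and S_meas: "\<And>u. u \<in> S \<Longrightarrow> u \<in> borel_measurable lebesgue"
    and S_bounded: "\<And>u. u \<in> S \<Longrightarrow> L2sq \<Omega> u \<le> ennreal C" and "C \<ge> 0"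
    and approx: "\<And>\<epsilon>. \<epsilon> > 0 \<Longrightarrow> \<exists>I (Q :: 'i \<Rightarrow> 'a set). finite I \<and> (\<forall>k\<in>I. Q k \<in> sets lebesgue)
        \<and> disjoint_family_on Q I \<and> \<Omega> \<subseteq> (\<Union>k\<in>I. Q k)
        \<and> (\<forall>u\<in>S. \<exists>c. (\<Sum>k\<in>I. \<integral>\<^sup>+x\<in>Q k \<inter> \<Omega>. ennreal ((u x - c k)\<^sup>2) \<partial>lebesgue) \<le> ennreal \<epsilon>)"
  shows "L2_totally_bounded \<Omega> S"
proof (rule L2_totally_boundedI_finite_classes)
  fix e :: real assume "e > 0"
  define \<epsilon> where "\<epsilon> = e\<^sup>2 / 12"
  define \<delta> where "\<delta> = e / (4 * sqrt (measure lebesgue \<Omega> + 1))"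
  have "\<epsilon> > 0" "\<delta> > 0"
    using \<open>e > 0\<close> by (simp_all add: \<epsilon>_def \<delta>_def add_nonneg_pos)
  then obtain I and Q :: "'i \<Rightarrow> 'a set" where I: "finite I" "\<And>k. k \<in> I \<Longrightarrow> Q k \<in> sets lebesgue"
      "disjoint_family_on Q I" "\<Omega> \<subseteq> (\<Union>k\<in>I. Q k)"
    and approx_\<epsilon>: "\<forall>u\<in>S. \<exists>c. (\<Sum>k\<in>I. \<integral>\<^sup>+x\<in>Q k \<inter> \<Omega>. ennreal ((u x - c k)\<^sup>2) \<partial>lebesgue) \<le> ennreal \<epsilon>"
    using approx by meson
  obtain c where c: "\<And>u. u \<in> S \<Longrightarrow>
      (\<Sum>k\<in>I. \<integral>\<^sup>+x\<in>Q k \<inter> \<Omega>. ennreal ((u x - c u k)\<^sup>2) \<partial>lebesgue) \<le> ennreal \<epsilon>"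
    using bchoice[OF approx_\<epsilon>] by blast
  obtain f :: "('a \<Rightarrow> real) \<Rightarrow> 'i \<Rightarrow> int" where "finite (f ` S)" and f: "\<forall>u\<in>S. \<forall>v\<in>S.
      f u = f v \<longrightarrow> L2sq \<Omega> (\<lambda>x. u x - v x) \<le> ennreal (6 * \<epsilon> + 3 * (\<delta>\<^sup>2 * measure lebesgue \<Omega>))"
    using exists_finite_rounding_classes[OF I \<Omega> S_meas S_bounded \<open>C \<ge> 0\<close> c less_imp_le[OF \<open>\<epsilon> > 0\<close>] \<open>\<delta> > 0\<close>]
    by blast
  have "\<delta>\<^sup>2 * measure lebesgue \<Omega> \<le> \<delta>\<^sup>2 * (measure lebesgue \<Omega> + 1)"
    by (simp add: mult_left_mono)
  also have "\<dots> = e\<^sup>2 / 16"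
    using add_nonneg_pos[OF measure_nonneg[of lebesgue \<Omega>] zero_less_one]
    by (simp add: \<delta>_def power_divide power_mult_distrib field_simps)
  finally have "\<delta>\<^sup>2 * measure lebesgue \<Omega> \<le> e\<^sup>2 / 16" .
  moreover have "e\<^sup>2 > 0"
    using \<open>e > 0\<close> by simp
  ultimately have "6 * \<epsilon> + 3 * (\<delta>\<^sup>2 * measure lebesgue \<Omega>) < e\<^sup>2"
    unfolding \<epsilon>_def by linarith
  then have "ennreal (6 * \<epsilon> + 3 * (\<delta>\<^sup>2 * measure lebesgue \<Omega>)) < ennreal (e\<^sup>2)"
    using \<open>e > 0\<close> by (intro ennreal_lessI) auto
  with \<open>finite (f ` S)\<close> f show "\<exists>f :: ('a \<Rightarrow> real) \<Rightarrow> 'i \<Rightarrow> int. finite (f ` S) \<and>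
      (\<forall>u\<in>S. \<forall>v\<in>S. f u = f v \<longrightarrow> L2sq \<Omega> (\<lambda>x. u x - v x) < ennreal (e\<^sup>2))"
    by (intro exI[of _ f]) (auto intro: le_less_trans)
qed

section \<open>A grid of half-open cubes\<close>

definition cell :: "real \<Rightarrow> ('a::euclidean_space \<Rightarrow> int) \<Rightarrow> 'a set" where
  "cell s k = {x. \<forall>b\<in>Basis. of_int (k b) * s \<le> x \<bullet> b \<and> x \<bullet> b < (of_int (k b) + 1) * s}"

lemma cell_in_sets_borel[measurable]: "cell s k \<in> sets borel"
  unfolding cell_def by measurable

lemma mem_cell_iff:
  fixes x :: "'a::euclidean_space"
  assumes "s > 0"
  shows "x \<in> cell s k \<longleftrightarrow> (\<forall>b\<in>Basis. k b = \<lfloor>x \<bullet> b / s\<rfloor>)"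
  unfolding cell_def using assms
  by (simp add: eq_commute[of "k _"] floor_eq_iff pos_le_divide_eq pos_divide_less_eq algebra_simps)

lemma norm_diff_le_in_cell:
  fixes x y :: "'a::euclidean_space"
  assumes "x \<in> cell s k" "y \<in> cell s k"
  shows "norm (x - y) \<le> real DIM('a) * s"
proof -
  have "norm (x - y) \<le> (\<Sum>b\<in>Basis. \<bar>(x - y) \<bullet> b\<bar>)"
    by (rule norm_le_l1)
  also have "\<dots> \<le> (\<Sum>b\<in>(Basis :: 'a set). s)"
  proof (rule sum_mono)
    fix b :: 'a assume "b \<in> Basis"
    with assms have "of_int (k b) * s \<le> x \<bullet> b" "x \<bullet> b < (of_int (k b) + 1) * s"
      "of_int (k b) * s \<le> y \<bullet> b" "y \<bullet> b < (of_int (k b) + 1) * s"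
      by (auto simp: cell_def)
    then show "\<bar>(x - y) \<bullet> b\<bar> \<le> s"
      by (simp add: inner_diff_left abs_le_iff algebra_simps)
  qed
  finally show ?thesis
    by simp
qed

lemma emeasure_cell_ge:
  fixes k :: "'a::euclidean_space \<Rightarrow> int"
  assumes "s > 0"
  shows "ennreal (s ^ DIM('a)) \<le> emeasure lborel (cell s k)"
proof -
  define l :: 'a where "l = (\<Sum>b\<in>Basis. (of_int (k b) * s) *\<^sub>R b)"
  have l: "l \<bullet> b = of_int (k b) * s" and l_s: "(l + s *\<^sub>R One) \<bullet> b = (of_int (k b) + 1) * s"
    if "b \<in> Basis" for b
    using that by (simp_all add: l_def inner_sum_left inner_Basis inner_add_left algebra_simps
        if_distrib sum.delta cong: if_cong)
  have "emeasure lborel (box l (l + s *\<^sub>R One)) = ennreal (s ^ DIM('a))"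
    using assms l l_s by (subst emeasure_lborel_box) (auto simp: inner_diff_left algebra_simps)
  moreover have "box l (l + s *\<^sub>R One) \<subseteq> cell s k"
    unfolding cell_def box_def using l l_s by fastforce
  ultimately show ?thesis
    by (metis emeasure_mono cell_in_sets_borel sets_lborel)
qed

lemma finite_cells_cover:
  fixes \<Omega> :: "'a::euclidean_space set"
  assumes "bounded \<Omega>" "s > 0"
  obtains I where "finite I" "disjoint_family_on (cell s) I" "\<Omega> \<subseteq> (\<Union>k\<in>I. cell s k)"
proof -
  obtain R where R: "\<And>x. x \<in> \<Omega> \<Longrightarrow> norm x \<le> R"
    using assms(1) bounded_iff by blast
  define I where "I = (\<Pi>\<^sub>E b\<in>(Basis :: 'a set). {-\<lceil>R / s\<rceil>..\<lceil>R / s\<rceil>})"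
  have "disjoint_family_on (cell s) I"
  unfolding disjoint_family_on_def
  proof (intro ballI impI)
    fix k k' assume "k \<in> I" "k' \<in> I" "k \<noteq> k'"
    then obtain b where "b \<in> Basis" "k b \<noteq> k' b"
      unfolding I_def by (metis PiE_ext)
    then show "cell s k \<inter> cell s k' = {}"
      by (auto simp: mem_cell_iff[OF \<open>s > 0\<close>])
  qed
  moreover have "\<Omega> \<subseteq> (\<Union>k\<in>I. cell s k)"
  proof
    fix x assume "x \<in> \<Omega>"
    have "\<bar>x \<bullet> b\<bar> \<le> R" if "b \<in> Basis" for b
      using Basis_le_norm[OF that, of x] R[OF \<open>x \<in> \<Omega>\<close>] by linarith
    then have "restrict (\<lambda>b. \<lfloor>x \<bullet> b / s\<rfloor>) Basis \<in> I"
      unfolding I_def using floor_divide_mem_symmetric_range[OF \<open>s > 0\<close>] by simp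
    moreover have "x \<in> cell s (restrict (\<lambda>b. \<lfloor>x \<bullet> b / s\<rfloor>) Basis)"
      by (simp add: mem_cell_iff[OF \<open>s > 0\<close>])
    ultimately show "x \<in> (\<Union>k\<in>I. cell s k)"
      by blast
  qed
  moreover have "finite I"
    unfolding I_def by (intro finite_PiE) auto
  ultimately show thesis
    using that by blast
qed

section \<open>Step approximation from the energy\<close>

lemma set_nn_integral_sq_diff_le_kernel:
  fixes g :: "'a::euclidean_space \<Rightarrow> real" and J :: "'a \<times> 'a \<Rightarrow> real"
  assumes g: "g \<in> borel_measurable lborel" and J[measurable]: "J \<in> borel_measurable lebesgue"
    and B[measurable]: "B \<in> sets lebesgue" and "U \<subseteq> B" "\<kappa> \<ge> 0"
    and J_large: "\<And>p. p \<in> U \<Longrightarrow> fst p \<noteq> snd p \<Longrightarrow> 1 \<le> \<kappa> * J p"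
  shows "(\<integral>\<^sup>+p\<in>U. ennreal ((g (fst p) - g (snd p))\<^sup>2) \<partial>lborel)
    \<le> ennreal \<kappa> * (\<integral>\<^sup>+p\<in>B. ennreal ((g (fst p) - g (snd p))\<^sup>2 * J p) \<partial>lebesgue)"
proof -
  have "(\<lambda>p. g (fst p)) \<in> borel_measurable (lborel :: ('a \<times> 'a) measure)"
    "(\<lambda>p. g (snd p)) \<in> borel_measurable (lborel :: ('a \<times> 'a) measure)"
    using g unfolding lborel_prod[symmetric] by measurable
  then have [measurable]: "(\<lambda>p. g (fst p)) \<in> borel_measurable (lebesgue :: ('a \<times> 'a) measure)"
    "(\<lambda>p. g (snd p)) \<in> borel_measurable (lebesgue :: ('a \<times> 'a) measure)"
    by (auto intro: measurable_completion)
  have "(\<integral>\<^sup>+p\<in>U. ennreal ((g (fst p) - g (snd p))\<^sup>2) \<partial>lborel)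
      = (\<integral>\<^sup>+p\<in>U. ennreal ((g (fst p) - g (snd p))\<^sup>2) \<partial>lebesgue)"
    by (rule nn_integral_completion[symmetric])
  also have "\<dots> \<le> (\<integral>\<^sup>+p\<in>B. ennreal \<kappa> * ennreal ((g (fst p) - g (snd p))\<^sup>2 * J p) \<partial>lebesgue)"
  proof (intro nn_integral_mono)
    fix p :: "'a \<times> 'a"
    show "ennreal ((g (fst p) - g (snd p))\<^sup>2) * indicator U p
      \<le> ennreal \<kappa> * ennreal ((g (fst p) - g (snd p))\<^sup>2 * J p) * indicator B p"
    proof (cases "p \<in> U \<and> fst p \<noteq> snd p")
      case True
      then have "1 \<le> \<kappa> * J p"
        using J_large by blast
      then have "J p \<ge> 0"
        using \<open>\<kappa> \<ge> 0\<close> mult_nonneg_nonpos[of \<kappa> "J p"] by linarith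
      have "(g (fst p) - g (snd p))\<^sup>2 \<le> \<kappa> * ((g (fst p) - g (snd p))\<^sup>2 * J p)"
        using mult_left_mono[OF \<open>1 \<le> \<kappa> * J p\<close>, of "(g (fst p) - g (snd p))\<^sup>2"] by (simp add: ac_simps)
      then show ?thesis
        using True \<open>U \<subseteq> B\<close> \<open>\<kappa> \<ge> 0\<close> \<open>J p \<ge> 0\<close> by (auto simp: ennreal_leI ennreal_mult[symmetric])
    qed auto
  qed
  also have "\<dots> = ennreal \<kappa> * (\<integral>\<^sup>+p\<in>B. ennreal ((g (fst p) - g (snd p))\<^sup>2 * J p) \<partial>lebesgue)"
    by (subst nn_integral_cmult[symmetric]) (simp_all add: mult.assoc)
  finally show ?thesis .
qed

lemma sum_cell_pair_integrals_le_energy: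
  fixes g u :: "'a::euclidean_space \<Rightarrow> real" and J :: "'a \<times> 'a \<Rightarrow> real" and Q :: "'i \<Rightarrow> 'a set"
  assumes g[measurable]: "g \<in> borel_measurable lborel" and ug: "AE x in lborel. u x = g x"
    and I: "finite I" "\<And>k. k \<in> I \<Longrightarrow> Q k \<in> sets lborel" "disjoint_family_on Q I"
    and \<Omega>: "\<Omega> \<in> sets lborel" and J: "J \<in> borel_measurable lebesgue"
    and "\<kappa> \<ge> 0"
    and J_large: "\<And>k x y. x \<in> Q k \<inter> \<Omega> \<Longrightarrow> y \<in> Q k \<Longrightarrow> x \<noteq> y \<Longrightarrow> 1 \<le> \<kappa> * J (x, y)"
  shows "(\<Sum>k\<in>I. \<integral>\<^sup>+p\<in>(Q k \<inter> \<Omega>) \<times> Q k. ennreal ((g (fst p) - g (snd p))\<^sup>2) \<partial>lborel)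
    \<le> ennreal \<kappa> * (\<integral>\<^sup>+p\<in>QOmega \<Omega>. ennreal ((u (fst p) - u (snd p))\<^sup>2 * J p) \<partial>lebesgue)"
proof -
  define U where "U = (\<Union>k\<in>I. (Q k \<inter> \<Omega>) \<times> Q k)"
  have cells: "(Q k \<inter> \<Omega>) \<times> Q k \<in> sets (lborel :: ('a \<times> 'a) measure)" if "k \<in> I" for k
    unfolding lborel_prod[symmetric] using I(2)[OF that] \<Omega> by (intro pair_measureI) auto
  have "disjoint_family_on (\<lambda>k. (Q k \<inter> \<Omega>) \<times> Q k) I"
    using I(3) by (auto simp: disjoint_family_on_def)
  moreover have "U \<in> sets lborel"
    unfolding U_def using cells I(1) by (auto intro: sets.finite_UN)
  moreover have "(\<lambda>p. ennreal ((g (fst p) - g (snd p))\<^sup>2)) \<in> borel_measurable (lborel :: ('a \<times> 'a) measure)"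
    unfolding lborel_prod[symmetric] by measurable
  ultimately have "(\<integral>\<^sup>+p\<in>U. ennreal ((g (fst p) - g (snd p))\<^sup>2) \<partial>lborel)
      = (\<Sum>k\<in>I. \<integral>\<^sup>+p\<in>(Q k \<inter> \<Omega>) \<times> Q k \<inter> U. ennreal ((g (fst p) - g (snd p))\<^sup>2) \<partial>lborel)"
    using nn_integral_split_partition[OF I(1) cells] by (auto simp: U_def)
  also have "\<dots> = (\<Sum>k\<in>I. \<integral>\<^sup>+p\<in>(Q k \<inter> \<Omega>) \<times> Q k. ennreal ((g (fst p) - g (snd p))\<^sup>2) \<partial>lborel)"
    by (intro sum.cong refl arg_cong[where f = "\<lambda>A. set_nn_integral lborel A _"]) (auto simp: U_def)
  finally have "(\<Sum>k\<in>I. \<integral>\<^sup>+p\<in>(Q k \<inter> \<Omega>) \<times> Q k. ennreal ((g (fst p) - g (snd p))\<^sup>2) \<partial>lborel)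
      \<le> ennreal \<kappa> * (\<integral>\<^sup>+p\<in>QOmega \<Omega>. ennreal ((g (fst p) - g (snd p))\<^sup>2 * J p) \<partial>lebesgue)"
  proof (rule subst, intro set_nn_integral_sq_diff_le_kernel[OF g J _ _ \<open>\<kappa> \<ge> 0\<close>])
    have "(- \<Omega>) \<times> (- \<Omega>) \<in> sets (lborel \<Otimes>\<^sub>M lborel :: ('a \<times> 'a) measure)"
      using \<Omega> by (intro pair_measureI) (simp_all add: borel_comp)
    then show "QOmega \<Omega> \<in> sets lebesgue"
      unfolding QOmega_def lborel_prod by (simp add: borel_comp)
    show "U \<subseteq> QOmega \<Omega>"
      by (auto simp: U_def QOmega_def)
    show "1 \<le> \<kappa> * J p" if "p \<in> U" "fst p \<noteq> snd p" for p
      using that J_large[of "fst p"] by (auto simp: U_def)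
  qed
  also have "(\<integral>\<^sup>+p\<in>QOmega \<Omega>. ennreal ((g (fst p) - g (snd p))\<^sup>2 * J p) \<partial>lebesgue)
      = (\<integral>\<^sup>+p\<in>QOmega \<Omega>. ennreal ((u (fst p) - u (snd p))\<^sup>2 * J p) \<partial>lebesgue)"
    by (intro nn_integral_cong_AE eventually_mono[OF AE_completion[OF AE_lborel_fst_snd[OF ug]]]) auto
  finally show ?thesis .
qed

lemma exists_step_constants_on_cells:
  fixes u :: "'a::euclidean_space \<Rightarrow> real" and J :: "'a \<times> 'a \<Rightarrow> real" and Q :: "'i \<Rightarrow> 'a set"
  assumes u: "u \<in> borel_measurable lebesgue"
    and I: "finite I" "\<And>k. k \<in> I \<Longrightarrow> Q k \<in> sets lborel" "disjoint_family_on Q I"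
    and m: "m > 0" "\<And>k. k \<in> I \<Longrightarrow> ennreal m \<le> emeasure lborel (Q k)"
    and \<Omega>: "\<Omega> \<in> sets lborel" and J: "J \<in> borel_measurable lebesgue"
    and "\<kappa> \<ge> 0"
    and J_large: "\<And>k x y. x \<in> Q k \<inter> \<Omega> \<Longrightarrow> y \<in> Q k \<Longrightarrow> x \<noteq> y \<Longrightarrow> 1 \<le> \<kappa> * J (x, y)"
    and energy: "(\<integral>\<^sup>+p\<in>QOmega \<Omega>. ennreal ((u (fst p) - u (snd p))\<^sup>2 * J p) \<partial>lebesgue) \<le> ennreal E"
    and "E \<ge> 0" "t > 0"
  shows "\<exists>c. (\<Sum>k\<in>I. \<integral>\<^sup>+x\<in>Q k \<inter> \<Omega>. ennreal ((u x - c k)\<^sup>2) \<partial>lebesgue) \<le> ennreal (\<kappa> * E / m + t)"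
proof -
  \<comment> \<open>Tonelli needs a Borel representative of the Lebesgue measurable \<open>u\<close>.\<close>
  obtain g where g[measurable]: "g \<in> borel_measurable lborel" and ug: "AE x in lborel. u x = g x"
    using completion_ex_borel_measurable_real[OF u] by auto
  define G where "G k y = (\<integral>\<^sup>+x\<in>Q k \<inter> \<Omega>. ennreal ((g x - g y)\<^sup>2) \<partial>lborel)" for k y
  have "(\<lambda>p. ennreal ((g (fst p) - g (snd p))\<^sup>2)) \<in> borel_measurable (lborel :: ('a \<times> 'a) measure)"
    unfolding lborel_prod[symmetric] by measurable
  then have "(\<Sum>k\<in>I. \<integral>\<^sup>+y\<in>Q k. G k y \<partial>lborel)
      = (\<Sum>k\<in>I. \<integral>\<^sup>+p\<in>(Q k \<inter> \<Omega>) \<times> Q k. ennreal ((g (fst p) - g (snd p))\<^sup>2) \<partial>lborel)"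
    unfolding G_def using I(2) \<Omega> by (intro sum.cong refl) (subst nn_integral_lborel_Times, auto)
  also have "\<dots> \<le> ennreal \<kappa> * (\<integral>\<^sup>+p\<in>QOmega \<Omega>. ennreal ((u (fst p) - u (snd p))\<^sup>2 * J p) \<partial>lebesgue)"
    by (rule sum_cell_pair_integrals_le_energy[OF g ug I \<Omega> J \<open>\<kappa> \<ge> 0\<close> J_large])
  also have "\<dots> \<le> ennreal (\<kappa> * E)"
    using mult_left_mono[OF energy] \<open>\<kappa> \<ge> 0\<close> by (simp add: ennreal_mult')
  finally have fibres: "(\<Sum>k\<in>I. \<integral>\<^sup>+y\<in>Q k. G k y \<partial>lborel) \<le> ennreal (\<kappa> * E)" .
  obtain y where y: "\<forall>k\<in>I. u (y k) = g (y k)"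
    and "(\<Sum>k\<in>I. G k (y k)) \<le> ennreal (\<kappa> * E / m + t)"
    using exists_points_below_average_sum[OF I(1) ug I(2) m(2) m(1) \<open>t > 0\<close> fibres
        mult_nonneg_nonneg[OF \<open>\<kappa> \<ge> 0\<close> \<open>E \<ge> 0\<close>]] by blast
  moreover have "(\<integral>\<^sup>+x\<in>Q k \<inter> \<Omega>. ennreal ((u x - u (y k))\<^sup>2) \<partial>lebesgue) = G k (y k)" if "k \<in> I" for k
    unfolding G_def nn_integral_completion using ug y that
    by (intro nn_integral_cong_AE) (auto elim!: eventually_mono)
  ultimately show ?thesis
    by (intro exI[of _ "\<lambda>k. u (y k)"]) simp
qed

lemma kernel_large_near_diagonal:
  fixes J :: "'a::euclidean_space \<times> 'a \<Rightarrow> real" and K :: "'a \<Rightarrow> real"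
  assumes J_ge_K: "\<And>x y. K (x - y) \<le> J (x, y)"
    and K_form: "\<And>z. 0 < norm z \<Longrightarrow> norm z < \<rho> \<Longrightarrow> K z = ell (norm z) / norm z ^ DIM('a)"
    and "\<rho> > 0" and ell: "filterlim ell at_top (at_right 0)" and "T > 0"
  shows "\<exists>r>0. \<forall>x y. x \<noteq> y \<longrightarrow> norm (x - y) \<le> r \<longrightarrow> T \<le> r ^ DIM('a) * J (x, y)"
proof -
  have "eventually (\<lambda>s. T \<le> ell s) (at_right 0)"
    using ell by (simp add: filterlim_at_top)
  then obtain d where "d > 0" and d: "\<And>s. 0 < s \<Longrightarrow> s < d \<Longrightarrow> T \<le> ell s"
    unfolding eventually_at_right_field by auto
  define r where "r = min d \<rho> / 2"
  have r: "0 < r" "r < d" "r < \<rho>"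
    using \<open>d > 0\<close> \<open>\<rho> > 0\<close> by (auto simp: r_def)
  have "T \<le> r ^ DIM('a) * J (x, y)" if "x \<noteq> y" "norm (x - y) \<le> r" for x y
  proof -
    let ?z = "norm (x - y)"
    have "?z > 0"
      using that(1) by simp
    moreover have "?z ^ DIM('a) \<le> r ^ DIM('a)"
      using that(2) by (intro power_mono) auto
    ultimately have "T / r ^ DIM('a) \<le> ell ?z / ?z ^ DIM('a)"
      using d[of ?z] that(2) r \<open>T > 0\<close> by (intro frac_le) auto
    also have "\<dots> \<le> J (x, y)"
      using K_form[OF \<open>?z > 0\<close>] that(2) r J_ge_K[of x y] by simp
    finally show ?thesis
      using r by (simp add: pos_divide_le_eq mult.commute)
  qed
  then show ?thesis
    using r(1) by blast
qed

lemma uniform_step_approximation_on_cells: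
  fixes \<Omega> :: "'a::euclidean_space set" and J :: "'a \<times> 'a \<Rightarrow> real"
  assumes "bounded \<Omega>" "\<Omega> \<in> sets lborel" and J: "J \<in> borel_measurable lebesgue"
    and J_large: "\<And>T. T > 0 \<Longrightarrow> \<exists>r>0. \<forall>x y. x \<noteq> y \<longrightarrow> norm (x - y) \<le> r \<longrightarrow> T \<le> r ^ DIM('a) * J (x, y)"
    and S_meas: "\<And>u. u \<in> S \<Longrightarrow> u \<in> borel_measurable lebesgue"
    and S_energy: "\<And>u. u \<in> S \<Longrightarrow>
      (\<integral>\<^sup>+p\<in>QOmega \<Omega>. ennreal ((u (fst p) - u (snd p))\<^sup>2 * J p) \<partial>lebesgue) \<le> ennreal E"
    and "E \<ge> 0" "\<epsilon> > 0"
  shows "\<exists>I (Q :: ('a \<Rightarrow> int) \<Rightarrow> 'a set). finite I \<and> (\<forall>k\<in>I. Q k \<in> sets lebesgue)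
        \<and> disjoint_family_on Q I \<and> \<Omega> \<subseteq> (\<Union>k\<in>I. Q k)
        \<and> (\<forall>u\<in>S. \<exists>c. (\<Sum>k\<in>I. \<integral>\<^sup>+x\<in>Q k \<inter> \<Omega>. ennreal ((u x - c k)\<^sup>2) \<partial>lebesgue) \<le> ennreal \<epsilon>)"
proof -
  define n where "n = real DIM('a)"
  define T where "T = 2 * n ^ DIM('a) * E / \<epsilon> + 1"
  have "n > 0" "T > 0"
    using \<open>E \<ge> 0\<close> \<open>\<epsilon> > 0\<close> by (simp_all add: n_def T_def add_nonneg_pos)
  then obtain r where "r > 0" and r: "\<And>x y. x \<noteq> y \<Longrightarrow> norm (x - y) \<le> r \<Longrightarrow> T \<le> r ^ DIM('a) * J (x, y)"
    using J_large by blast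
  define s where "s = r / n"
  define \<kappa> where "\<kappa> = r ^ DIM('a) / T"
  have "s > 0" "\<kappa> \<ge> 0"
    using \<open>r > 0\<close> \<open>n > 0\<close> \<open>T > 0\<close> by (simp_all add: s_def \<kappa>_def)
  obtain I where I: "finite I" "disjoint_family_on (cell s) I" "\<Omega> \<subseteq> (\<Union>k\<in>I. cell s k)"
    using finite_cells_cover[OF \<open>bounded \<Omega>\<close> \<open>s > 0\<close>] .
  have J_cell: "1 \<le> \<kappa> * J (x, y)" if "x \<in> cell s k \<inter> \<Omega>" "y \<in> cell s k" "x \<noteq> y" for k x y
  proof -
    have "norm (x - y) \<le> r"
      using norm_diff_le_in_cell[of x s k y] that \<open>n > 0\<close> by (simp add: s_def n_def)
    then show ?thesis
      using r[OF \<open>x \<noteq> y\<close>] \<open>T > 0\<close> by (simp add: \<kappa>_def pos_le_divide_eq)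
  qed
  have "\<kappa> * E / s ^ DIM('a) = n ^ DIM('a) * E / T"
    using \<open>n > 0\<close> \<open>T > 0\<close> \<open>r > 0\<close> by (simp add: \<kappa>_def s_def power_divide)
  also have "\<dots> \<le> \<epsilon> / 2"
    using \<open>E \<ge> 0\<close> \<open>\<epsilon> > 0\<close> \<open>n > 0\<close> \<open>T > 0\<close> by (simp add: T_def field_simps)
  finally have budget: "\<kappa> * E / s ^ DIM('a) + \<epsilon> / 2 \<le> \<epsilon>"
    by linarith
  have "\<exists>c. (\<Sum>k\<in>I. \<integral>\<^sup>+x\<in>cell s k \<inter> \<Omega>. ennreal ((u x - c k)\<^sup>2) \<partial>lebesgue) \<le> ennreal \<epsilon>"
    if "u \<in> S" for u
  proof -
    have "\<exists>c. (\<Sum>k\<in>I. \<integral>\<^sup>+x\<in>cell s k \<inter> \<Omega>. ennreal ((u x - c k)\<^sup>2) \<partial>lebesgue)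
        \<le> ennreal (\<kappa> * E / s ^ DIM('a) + \<epsilon> / 2)"
      using S_meas[OF that] I(1,2) emeasure_cell_ge[OF \<open>s > 0\<close>] \<open>\<Omega> \<in> sets lborel\<close> J \<open>\<kappa> \<ge> 0\<close>
        J_cell S_energy[OF that] \<open>E \<ge> 0\<close> \<open>s > 0\<close> \<open>\<epsilon> > 0\<close> cell_in_sets_borel
      by (intro exists_step_constants_on_cells[where Q = "cell s"]) auto
    then show ?thesis
      using budget by (meson ennreal_leI order_trans)
  qed
  then show ?thesis
    using I by (intro exI[of _ I] exI[of _ "cell s"]) auto
qed

lemma bounds_of_HJnormsq_le:
  assumes "HJnormsq J \<Omega> u \<le> ennreal C" "C \<ge> 0"
  shows "L2sq \<Omega> u \<le> ennreal C"
    and "(\<integral>\<^sup>+p\<in>QOmega \<Omega>. ennreal ((u (fst p) - u (snd p))\<^sup>2 * J p) \<partial>lebesgue) \<le> ennreal (2 * C)"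
proof -
  show "L2sq \<Omega> u \<le> ennreal C"
    using assms(1) unfolding HJnormsq_def by (rule order_trans[OF add_increasing2[OF zero_le order_refl]])
  have "(2 :: ennreal) * (1 / 2) = 1"
    by (simp add: ennreal_divide_times[symmetric] ennreal_divide_self)
  then have "(\<integral>\<^sup>+p\<in>QOmega \<Omega>. ennreal ((u (fst p) - u (snd p))\<^sup>2 * J p) \<partial>lebesgue) = 2 * energy J \<Omega> u"
    by (simp add: energy_def mult.assoc[symmetric])
  also have "\<dots> \<le> 2 * ennreal C"
    using order_trans[OF add_increasing[OF zero_le order_refl] assms(1)[unfolded HJnormsq_def]]
    by (rule mult_left_mono) simp
  also have "\<dots> = ennreal (2 * C)"
    using \<open>C \<ge> 0\<close> by (simp add: ennreal_mult')
  finally show "(\<integral>\<^sup>+p\<in>QOmega \<Omega>. ennreal ((u (fst p) - u (snd p))\<^sup>2 * J p) \<partial>lebesgue) \<le> ennreal (2 * C)" .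
qed

theorem mainTheorem2:
  fixes \<Omega> :: "'a::euclidean_space set"
    and J :: "'a \<times> 'a \<Rightarrow> real"
    and K :: "'a \<Rightarrow> real"
    and ell :: "real \<Rightarrow> real"
    and \<rho> :: real
  assumes "bounded \<Omega>" and "open \<Omega>"
    and J_meas: "J \<in> borel_measurable lebesgue"
    and J_nonneg: "\<And>x y. J (x, y) \<ge> 0"
    and J_sym: "\<And>x y. J (x, y) = J (y, x)"
    and J_int: "\<exists>C::real. \<forall>x. (\<integral>\<^sup>+ y. ennreal (min 1 ((norm (x - y))\<^sup>2) * J (x, y)) \<partial>lebesgue) \<le> ennreal C"
    and K_meas: "K \<in> borel_measurable lebesgue"
    and K_nonneg: "\<And>z. K z \<ge> 0"
    and J_ge_K: "\<And>x y. J (x, y) \<ge> K (x - y)"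
    and K_nonint: "\<And>\<epsilon>. \<epsilon> > 0 \<Longrightarrow> \<not> set_integrable lebesgue (ball 0 \<epsilon>) K"
    and \<rho>_pos: "\<rho> > 0"
    and ell_pos: "\<And>s. 0 < s \<Longrightarrow> s < \<rho> \<Longrightarrow> ell s > 0"
    and ell_bdd: "\<And>\<epsilon>. 0 < \<epsilon> \<Longrightarrow> \<epsilon> < \<rho> \<Longrightarrow>
        \<exists>a b. 0 < a \<and> 0 < b \<and> (\<forall>s. \<epsilon> \<le> s \<and> s < \<rho> \<longrightarrow> a \<le> ell s \<and> ell s \<le> b)"
    and K_form: "\<And>z. 0 < norm z \<Longrightarrow> norm z < \<rho> \<Longrightarrow> K z = ell (norm z) / (norm z) ^ DIM('a)"
    and M_inf: "((\<lambda>r. \<integral>\<^sup>+ s \<in> {r..\<rho>}. ennreal (ell s / s) \<partial>lborel) \<longlongrightarrow> \<infinity>) (at_right 0)"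
    and ell_inf: "filterlim ell at_top (at_right 0)"
  shows "\<forall>S. S \<subseteq> HJ J \<Omega> \<and> (\<exists>C::real. \<forall>u\<in>S. HJnormsq J \<Omega> u \<le> ennreal C)
           \<longrightarrow> L2_totally_bounded \<Omega> S"
proof (intro allI impI)
  fix S assume "S \<subseteq> HJ J \<Omega> \<and> (\<exists>C::real. \<forall>u\<in>S. HJnormsq J \<Omega> u \<le> ennreal C)"
  then obtain C0 where S: "S \<subseteq> HJ J \<Omega>" and C0: "\<And>u. u \<in> S \<Longrightarrow> HJnormsq J \<Omega> u \<le> ennreal C0"
    by blast
  define C where "C = max C0 0"
  have "C \<ge> 0" "2 * C \<ge> 0"
    by (simp_all add: C_def)
  have C: "HJnormsq J \<Omega> u \<le> ennreal C" if "u \<in> S" for u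
    using C0[OF that] by (rule order_trans) (simp add: C_def ennreal_leI)
  have S_meas: "\<And>u. u \<in> S \<Longrightarrow> u \<in> borel_measurable lebesgue"
    using S by (auto simp: HJ_def)
  note S_bounds = bounds_of_HJnormsq_le[OF C \<open>C \<ge> 0\<close>]
  have J_large: "\<exists>r>0. \<forall>x y. x \<noteq> y \<longrightarrow> norm (x - y) \<le> r \<longrightarrow> T \<le> r ^ DIM('a) * J (x, y)"
    if "T > 0" for T
    using kernel_large_near_diagonal[OF J_ge_K K_form \<rho>_pos ell_inf that] .
  have \<Omega>: "\<Omega> \<in> sets lborel" "\<Omega> \<in> sets lebesgue" "emeasure lebesgue \<Omega> \<noteq> \<infinity>"
    using \<open>open \<Omega>\<close> \<open>bounded \<Omega>\<close> emeasure_bounded_finite[of \<Omega>] by auto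
  show "L2_totally_bounded \<Omega> S"
  proof (rule L2_totally_bounded_of_step_approximation[OF \<Omega>(2,3) S_meas S_bounds(1) \<open>C \<ge> 0\<close>])
    fix \<epsilon> :: real assume "\<epsilon> > 0"
    with \<open>2 * C \<ge> 0\<close> show "\<exists>I (Q :: ('a \<Rightarrow> int) \<Rightarrow> 'a set). finite I \<and> (\<forall>k\<in>I. Q k \<in> sets lebesgue)
        \<and> disjoint_family_on Q I \<and> \<Omega> \<subseteq> (\<Union>k\<in>I. Q k)
        \<and> (\<forall>u\<in>S. \<exists>c. (\<Sum>k\<in>I. \<integral>\<^sup>+x\<in>Q k \<inter> \<Omega>. ennreal ((u x - c k)\<^sup>2) \<partial>lebesgue) \<le> ennreal \<epsilon>)"
      by (intro uniform_step_approximation_on_cells[OF \<open>bounded \<Omega>\<close> \<Omega>(1) J_meas J_large S_meas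
            S_bounds(2)])
  qed
qed

end
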